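(* Let $G$ be a bipartite edge-magic simple graph with stable sets $X$ and $Y$, and suppose $G\cong H_1\oplus H_2$ is a decomposition of $G$. Then $\lim_{n\to\infty}|\tau_{S_{2n}(G;H_1,H_2)}|=\infty$.
   Context: For a $(p,q)$-graph $G$ ($p$ vertices, $q$ edges), an edge-magic labeling is a bijection $f:V(G)\cup E(G)\to[1,p+q]$ such that $f(x)+f(xy)+f(y)$ equals a constant (the valence) for every edge $xy$. For a graph $H$, $\tau_H$ is the set of integers that are valences of edge-magic labelings of $H$. A decomposition $G\cong H_1\oplus H_2$ means $H_1,H_2$ are subgraphs of $G$ whose edge sets partition $E(G)$. Writing $X=\{x_i\}_{i=1}^s$, $Y=\{y_j\}_{j=1}^t$, $S_{2n}(G;H_1,H_2)$ is the graph with vertex set $X\cup Y\cup\bigcup_{k=1}^n X_k\cup\bigcup_{k=1}^n Y_k$, where $X_k=\{x_i^k\}_{i=1}^s$, $Y_k=\{y_j^k\}_{j=1}^t$ are new vertices, and edge set $E(G)\cup\{x_iy_j^k: x_iy_j\in E(H_1),\,k\in[1,n]\}\cup\{x_i^ky_j: x_iy_j\in E(H_2),\,k\in[1,n]\}$. *)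

theory Defs
  imports Main
begin

definition simple_graph :: "'a set \<Rightarrow> 'a set set \<Rightarrow> bool" where
  "simple_graph V E \<longleftrightarrow> finite V \<and> E \<subseteq> {{x, y} | x y. x \<in> V \<and> y \<in> V \<and> x \<noteq> y}"

definition edge_magic_labeling ::
  "'a set \<Rightarrow> 'a set set \<Rightarrow> ('a + 'a set \<Rightarrow> nat) \<Rightarrow> nat \<Rightarrow> bool" where
  "edge_magic_labeling V E f k \<longleftrightarrow>
     bij_betw f (Inl ` V \<union> Inr ` E) {1 .. card V + card E} \<and>
     (\<forall>x y. {x, y} \<in> E \<and> x \<noteq> y \<longrightarrow> f (Inl x) + f (Inr {x, y}) + f (Inl y) = k)"

definition valences :: "'a set \<Rightarrow> 'a set set \<Rightarrow> nat set" where
  "valences V E = {k. \<exists>f. edge_magic_labeling V E f k}"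

definition edge_magic :: "'a set \<Rightarrow> 'a set set \<Rightarrow> bool" where
  "edge_magic V E \<longleftrightarrow> valences V E \<noteq> {}"

definition bipartite_with :: "'a set \<Rightarrow> 'a set set \<Rightarrow> 'a set \<Rightarrow> 'a set \<Rightarrow> bool" where
  "bipartite_with V E X Y \<longleftrightarrow> X \<union> Y = V \<and> X \<inter> Y = {} \<and>
     (\<forall>e\<in>E. \<exists>x\<in>X. \<exists>y\<in>Y. e = {x, y})"

definition edge_decomposition :: "'a set set \<Rightarrow> 'a set set \<Rightarrow> 'a set set \<Rightarrow> bool" where
  "edge_decomposition E E1 E2 \<longleftrightarrow> E1 \<union> E2 = E \<and> E1 \<inter> E2 = {}"

text \<open>The graph S_{2n}(G;H1,H2). Vertex (v,0) is the original v, (v,k) for k in [1,n]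
  is the copy v^k.\<close>
definition S2n_vertices :: "'a set \<Rightarrow> nat \<Rightarrow> ('a \<times> nat) set" where
  "S2n_vertices V n = V \<times> {0..n}"

definition S2n_edges ::
  "'a set \<Rightarrow> 'a set \<Rightarrow> 'a set set \<Rightarrow> 'a set set \<Rightarrow> 'a set set \<Rightarrow> nat \<Rightarrow> ('a \<times> nat) set set" where
  "S2n_edges X Y E E1 E2 n =
     (\<lambda>e. (\<lambda>v. (v, 0)) ` e) ` E
     \<union> {{(x, 0), (y, k)} | x y k. x \<in> X \<and> y \<in> Y \<and> {x, y} \<in> E1 \<and> 1 \<le> k \<and> k \<le> n}
     \<union> {{(x, k), (y, 0)} | x y k. x \<in> X \<and> y \<in> Y \<and> {x, y} \<in> E2 \<and> 1 \<le> k \<and> k \<le> n}"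

end

theory Submission
  imports Defs "HOL-Combinatorics.Transposition"
begin

text \<open>Every vertex or edge of \<open>S\<^sub>2\<^sub>n(G;H\<^sub>1,H\<^sub>2)\<close> lies over a vertex or edge \<open>z\<close> of \<open>G\<close> at a
  level in \<open>{0..n}\<close>, and this projection is a bijection onto \<open>(V \<uplus> E) \<times> {0..n}\<close>. Given an
  edge-magic labeling \<open>f\<close> of \<open>G\<close> with valence \<open>\<sigma>\<close>, label the element over \<open>z\<close> at level \<open>c\<close>
  by \<open>(f z - 1)(n + 1) + \<ell>(c) + 1\<close>, where \<open>\<ell>\<close> is a permutation of \<open>{0..n}\<close>; this is a
  bijection onto \<open>[1, (p + q)(n + 1)]\<close>. Each edge of \<open>S\<^sub>2\<^sub>n\<close> joins a vertex at level \<open>0\<close> to a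
  vertex at level \<open>b\<close> and itself has level \<open>b\<close>. Taking \<open>\<ell> = \<tau>\<close> on vertices and \<open>\<ell> = n - \<tau>\<close> on
  edges, with \<open>\<tau>\<close> the transposition of \<open>0\<close> and \<open>t\<close>, the offsets along every edge add up to
  \<open>t + n\<close>. Hence \<open>(\<sigma> - 3)(n + 1) + n + 3 + t\<close> is a valence for each \<open>t \<le> n\<close>, giving at least
  \<open>n + 1\<close> valences.\<close>

lemma bij_betw_mixed_radix:
  fixes m N :: nat
  shows "bij_betw (\<lambda>(a, r). (a - 1) * m + r + 1) ({1..N} \<times> {..<m}) {1..N * m}"
proof (rule bij_betw_imageI)
  have "a - 1 = a' - 1 \<and> r = r'"
    if "r < m" "r' < m" "(a - 1) * m + r = (a' - 1) * m + r'" for a a' r r' :: nat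
    using that
    by (metis add.commute div_mult_self1 mod_mult_self1 div_less mod_less add_0 less_zeroE)
  then show "inj_on (\<lambda>(a, r). (a - 1) * m + r + 1) ({1..N} \<times> {..<m})"
    by (fastforce simp: inj_on_def)
  show "(\<lambda>(a, r). (a - 1) * m + r + 1) ` ({1..N} \<times> {..<m}) = {1..N * m}"
  proof (intro equalityI subsetI)
    fix k assume "k \<in> (\<lambda>(a, r). (a - 1) * m + r + 1) ` ({1..N} \<times> {..<m})"
    then obtain a r where "1 \<le> a" "a \<le> N" "r < m" "k = (a - 1) * m + r + 1" by auto
    moreover have "(a - 1) * m + r + 1 \<le> (a - 1) * m + m" using \<open>r < m\<close> by simp
    moreover have "(a - 1) * m + m = a * m" using \<open>1 \<le> a\<close> by (cases a) auto
    moreover have "a * m \<le> N * m" using \<open>a \<le> N\<close> by simp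
    ultimately show "k \<in> {1..N * m}" unfolding atLeastAtMost_iff by linarith
  next
    fix k assume k: "k \<in> {1..N * m}"
    then have "0 < m" by (cases m) auto
    have "(k - 1) div m < N" using k \<open>0 < m\<close> by (simp add: div_less_iff_less_mult) linarith
    moreover have "k = ((k - 1) div m + 1 - 1) * m + (k - 1) mod m + 1" using k by simp
    ultimately show "k \<in> (\<lambda>(a, r). (a - 1) * m + r + 1) ` ({1..N} \<times> {..<m})"
      using \<open>0 < m\<close> by (force intro!: image_eqI[of _ _ "((k - 1) div m + 1, (k - 1) mod m)"])
  qed
qed

lemma bij_betw_fiberwise:
  assumes "\<And>a. a \<in> A \<Longrightarrow> bij_betw (p a) L L"
  shows "bij_betw (\<lambda>(a, l). (a, p a l)) (A \<times> L) (A \<times> L)"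
proof (rule bij_betw_imageI)
  show "inj_on (\<lambda>(a, l). (a, p a l)) (A \<times> L)"
    using assms by (auto simp: bij_betw_def inj_on_def)
  have "p a ` L = L" if "a \<in> A" for a
    using assms[OF that] by (simp add: bij_betw_def)
  then show "(\<lambda>(a, l). (a, p a l)) ` (A \<times> L) = A \<times> L"
    by (fastforce simp: image_iff)
qed

definition lift_edge :: "'a set set \<Rightarrow> 'a \<Rightarrow> 'a \<Rightarrow> nat \<Rightarrow> ('a \<times> nat) set" where
  "lift_edge E1 x y b = (if {x, y} \<in> E1 then {(x, 0), (y, b)} else {(x, b), (y, 0)})"

lemma fst_image_lift_edge [simp]: "fst ` lift_edge E1 x y b = {x, y}"
  by (auto simp: lift_edge_def)

lemma Max_snd_image_lift_edge [simp]: "Max (snd ` lift_edge E1 x y b) = b"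
  by (auto simp: lift_edge_def)

lemma lift_edge_endpoints:
  "\<exists>a a'. lift_edge E1 x y b = {(x, a), (y, a')} \<and> {a, a'} = {0, b}"
  by (auto simp: lift_edge_def)

lemma S2n_edges_eq:
  assumes "bipartite_with V E X Y" and "edge_decomposition E E1 E2"
  shows "S2n_edges X Y E E1 E2 n =
    {lift_edge E1 x y b | x y b. x \<in> X \<and> y \<in> Y \<and> {x, y} \<in> E \<and> b \<le> n}"
proof -
  have E: "E = E1 \<union> E2" and disj: "E1 \<inter> E2 = {}"
    using assms(2) by (auto simp: edge_decomposition_def)
  have XY: "\<And>e. e \<in> E \<Longrightarrow> \<exists>x\<in>X. \<exists>y\<in>Y. e = {x, y}"
    using assms(1) by (auto simp: bipartite_with_def)
  have "\<exists>x y b. d = lift_edge E1 x y b \<and> x \<in> X \<and> y \<in> Y \<and> {x, y} \<in> E \<and> b \<le> n"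
    if "d \<in> S2n_edges X Y E E1 E2 n" for d
  proof -
    from that consider (base) e where "e \<in> E" "d = (\<lambda>v. (v, 0)) ` e"
      | (E1) x y k where "x \<in> X" "y \<in> Y" "{x, y} \<in> E1" "k \<le> n" "d = {(x, 0), (y, k)}"
      | (E2) x y k where "x \<in> X" "y \<in> Y" "{x, y} \<in> E2" "k \<le> n" "d = {(x, k), (y, 0)}"
      unfolding S2n_edges_def by blast
    then show ?thesis
    proof cases
      case base
      then obtain x y where "x \<in> X" "y \<in> Y" "e = {x, y}" using XY by blast
      with base have "d = lift_edge E1 x y 0" by (auto simp: lift_edge_def)
      with \<open>x \<in> X\<close> \<open>y \<in> Y\<close> base(1) \<open>e = {x, y}\<close> show ?thesis by blast
    next
      case E1
      then have "d = lift_edge E1 x y k" by (simp add: lift_edge_def)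
      with E1 show ?thesis unfolding E by blast
    next
      case E2
      then have "d = lift_edge E1 x y k" using disj by (auto simp: lift_edge_def)
      with E2 show ?thesis unfolding E by blast
    qed
  qed
  moreover have "lift_edge E1 x y b \<in> S2n_edges X Y E E1 E2 n"
    if "x \<in> X" "y \<in> Y" "{x, y} \<in> E" "b \<le> n" for x y b
  proof (cases "b = 0")
    case True
    then have "lift_edge E1 x y b = (\<lambda>v. (v, 0)) ` {x, y}" by (simp add: lift_edge_def)
    with that(3) show ?thesis unfolding S2n_edges_def by blast
  next
    case False
    then show ?thesis using that unfolding S2n_edges_def E lift_edge_def by auto
  qed
  ultimately show ?thesis by blast
qed

lemma bij_betw_S2n_edges:
  assumes "bipartite_with V E X Y" and "edge_decomposition E E1 E2"
  shows "bij_betw (\<lambda>d. (fst ` d, Max (snd ` d))) (S2n_edges X Y E E1 E2 n) (E \<times> {0..n})"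
proof (rule bij_betw_imageI)
  have disj: "X \<inter> Y = {}" and XY: "\<And>e. e \<in> E \<Longrightarrow> \<exists>x\<in>X. \<exists>y\<in>Y. e = {x, y}"
    using assms(1) by (auto simp: bipartite_with_def)
  note edges = S2n_edges_eq[OF assms]
  show "inj_on (\<lambda>d. (fst ` d, Max (snd ` d))) (S2n_edges X Y E E1 E2 n)"
  proof (rule inj_onI)
    fix d d'
    assume "d \<in> S2n_edges X Y E E1 E2 n" "d' \<in> S2n_edges X Y E E1 E2 n"
    then obtain x y b x' y' b' where "x \<in> X" "y \<in> Y" "x' \<in> X" "y' \<in> Y"
      and d: "d = lift_edge E1 x y b" and d': "d' = lift_edge E1 x' y' b'"
      unfolding edges by blast
    moreover assume "(fst ` d, Max (snd ` d)) = (fst ` d', Max (snd ` d'))"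
    ultimately have "x = x'" "y = y'" "b = b'" using disj by (auto simp: doubleton_eq_iff)
    then show "d = d'" by (simp add: d d')
  qed
  show "(\<lambda>d. (fst ` d, Max (snd ` d))) ` S2n_edges X Y E E1 E2 n = E \<times> {0..n}"
  proof (intro equalityI subsetI)
    fix p assume "p \<in> (\<lambda>d. (fst ` d, Max (snd ` d))) ` S2n_edges X Y E E1 E2 n"
    then show "p \<in> E \<times> {0..n}" unfolding edges by auto
  next
    fix p assume "p \<in> E \<times> {0..n}"
    then obtain x y b where "x \<in> X" "y \<in> Y" "{x, y} \<in> E" "b \<le> n" "p = ({x, y}, b)"
      using XY by fastforce
    then have "lift_edge E1 x y b \<in> S2n_edges X Y E E1 E2 n"
      and "p = (\<lambda>d. (fst ` d, Max (snd ` d))) (lift_edge E1 x y b)"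
      unfolding edges by auto
    then show "p \<in> (\<lambda>d. (fst ` d, Max (snd ` d))) ` S2n_edges X Y E E1 E2 n" by blast
  qed
qed

lemma bij_betw_inj_image:
  assumes "inj_on g A" and "bij_betw (h \<circ> g) A B"
  shows "bij_betw h (g ` A) B"
  using assms bij_betw_comp_iff inj_on_imp_bij_betw by blast

definition S2n_proj :: "('a \<times> nat) + ('a \<times> nat) set \<Rightarrow> ('a + 'a set) \<times> nat" where
  "S2n_proj w =
    (case w of Inl (v, a) \<Rightarrow> (Inl v, a) | Inr d \<Rightarrow> (Inr (fst ` d), Max (snd ` d)))"

lemma bij_betw_S2n_proj:
  assumes "bipartite_with V E X Y" and "edge_decomposition E E1 E2"
  shows "bij_betw S2n_proj (Inl ` S2n_vertices V n \<union> Inr ` S2n_edges X Y E E1 E2 n)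
    ((Inl ` V \<union> Inr ` E) \<times> {0..n})"
proof -
  have "bij_betw (S2n_proj \<circ> Inl) (S2n_vertices V n) (Inl ` V \<times> {0..n})"
  proof -
    have "S2n_proj \<circ> Inl = map_prod (Inl :: 'a \<Rightarrow> 'a + 'a set) id" by (auto simp: S2n_proj_def)
    moreover have "bij_betw (map_prod Inl id) (V \<times> {0..n}) (Inl ` V \<times> {0..n})"
      by (intro bij_betw_map_prod inj_on_imp_bij_betw bij_betw_id) simp
    ultimately show ?thesis unfolding S2n_vertices_def by simp
  qed
  then have vertices: "bij_betw S2n_proj (Inl ` S2n_vertices V n) (Inl ` V \<times> {0..n})"
    by (simp add: bij_betw_inj_image)
  have "bij_betw (S2n_proj \<circ> Inr) (S2n_edges X Y E E1 E2 n) (Inr ` E \<times> {0..n})"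
  proof -
    have "S2n_proj \<circ> Inr
        = map_prod (Inr :: 'a set \<Rightarrow> 'a + 'a set) id \<circ> (\<lambda>d. (fst ` d, Max (snd ` d)))"
      by (auto simp: S2n_proj_def)
    moreover have "bij_betw (map_prod Inr id) (E \<times> {0..n}) (Inr ` E \<times> {0..n})"
      by (intro bij_betw_map_prod inj_on_imp_bij_betw bij_betw_id) simp
    ultimately show ?thesis using bij_betw_trans[OF bij_betw_S2n_edges[OF assms]] by simp
  qed
  then have edges: "bij_betw S2n_proj (Inr ` S2n_edges X Y E E1 E2 n) (Inr ` E \<times> {0..n})"
    by (simp add: bij_betw_inj_image)
  show ?thesis
    unfolding Sigma_Un_distrib1 by (rule bij_betw_combine[OF vertices edges]) blast
qed

definition S2n_level :: "nat \<Rightarrow> nat \<Rightarrow> 'a + 'b \<Rightarrow> nat \<Rightarrow> nat" where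
  "S2n_level n t z b = (case z of Inl _ \<Rightarrow> transpose 0 t b | Inr _ \<Rightarrow> n - transpose 0 t b)"

definition S2n_labeling ::
  "('a + 'a set \<Rightarrow> nat) \<Rightarrow> nat \<Rightarrow> nat \<Rightarrow> ('a \<times> nat) + ('a \<times> nat) set \<Rightarrow> nat" where
  "S2n_labeling f n t w =
    (case S2n_proj w of (z, b) \<Rightarrow> (f z - 1) * (n + 1) + S2n_level n t z b + 1)"

lemma bij_betw_S2n_level:
  assumes "t \<le> n"
  shows "bij_betw (S2n_level n t z) {0..n} {0..n}"
proof -
  have transp: "bij_betw (transpose 0 t) {0..n} {0..n}"
    using assms by (simp add: bij_betw_def)
  have "bij_betw (\<lambda>b. n - b) {0..n} {0..n}"
    by (rule bij_betw_byWitness[where f' = "\<lambda>b. n - b"]) auto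
  with transp have "bij_betw ((\<lambda>b. n - b) \<circ> transpose 0 t) {0..n} {0..n}"
    by (rule bij_betw_trans)
  with transp show ?thesis
    by (cases z) (simp_all add: S2n_level_def [abs_def] comp_def)
qed

lemma bij_betw_S2n_labeling:
  assumes "bipartite_with V E X Y" and "edge_decomposition E E1 E2"
    and "bij_betw f (Inl ` V \<union> Inr ` E) {1..N}" and "t \<le> n"
  shows "bij_betw (S2n_labeling f n t) (Inl ` S2n_vertices V n \<union> Inr ` S2n_edges X Y E E1 E2 n)
    {1..N * (n + 1)}"
proof -
  let ?A = "Inl ` V \<union> Inr ` E"
  have level: "bij_betw (\<lambda>(z, b). (z, S2n_level n t z b)) (?A \<times> {0..n}) (?A \<times> {0..n})"
    using assms(4) by (intro bij_betw_fiberwise bij_betw_S2n_level)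
  have label: "bij_betw (map_prod f id) (?A \<times> {0..n}) ({1..N} \<times> {..<n + 1})"
    using assms(3) by (simp add: bij_betw_map_prod atLeast0AtMost lessThan_Suc_atMost)
  have "S2n_labeling f n t = (\<lambda>(a, r). (a - 1) * (n + 1) + r + 1) \<circ> (map_prod f id
      \<circ> ((\<lambda>(z, b). (z, S2n_level n t z b)) \<circ> S2n_proj))"
    by (auto simp: S2n_labeling_def split: prod.split)
  then show ?thesis
    using bij_betw_trans[OF bij_betw_trans[OF
          bij_betw_trans[OF bij_betw_S2n_proj[OF assms(1,2)] level] label] bij_betw_mixed_radix]
    by simp
qed

lemma S2n_labeling_edge_sum:
  assumes "bipartite_with V E X Y" and "edge_decomposition E E1 E2"
    and "edge_magic_labeling V E f \<sigma>" and "t \<le> n" and "{u, w} \<in> S2n_edges X Y E E1 E2 n"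
  shows "S2n_labeling f n t (Inl u) + S2n_labeling f n t (Inr {u, w}) + S2n_labeling f n t (Inl w)
    = (\<sigma> - 3) * (n + 1) + n + 3 + t"
proof -
  obtain x y b where xy: "x \<in> X" "y \<in> Y" "{x, y} \<in> E" "b \<le> n"
    and uw: "{u, w} = lift_edge E1 x y b"
    using assms(5) unfolding S2n_edges_eq[OF assms(1,2)] by blast
  obtain a a' where lift: "lift_edge E1 x y b = {(x, a), (y, a')}" and aa': "{a, a'} = {0, b}"
    using lift_edge_endpoints[of E1 x y b] by blast
  have "x \<noteq> y" "x \<in> V" "y \<in> V" using xy assms(1) unfolding bipartite_with_def by blast+
  have bij: "bij_betw f (Inl ` V \<union> Inr ` E) {1..card V + card E}"
    and sum: "f (Inl x) + f (Inr {x, y}) + f (Inl y) = \<sigma>"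
    using assms(3) xy(3) \<open>x \<noteq> y\<close> unfolding edge_magic_labeling_def by blast+
  have pos: "1 \<le> f (Inl x)" "1 \<le> f (Inr {x, y})" "1 \<le> f (Inl y)"
    using bij_betwE[OF bij] xy(3) \<open>x \<in> V\<close> \<open>y \<in> V\<close> by auto
  have levels: "transpose 0 t a + transpose 0 t a' = t + transpose 0 t b"
    using aa' by (auto simp: doubleton_eq_iff)
  have "transpose 0 t b \<le> n" using xy(4) assms(4) by (simp add: transpose_def)
  have edge: "S2n_labeling f n t (Inr (lift_edge E1 x y b))
      = (f (Inr {x, y}) - 1) * (n + 1) + (n - transpose 0 t b) + 1"
    by (simp add: S2n_labeling_def S2n_proj_def S2n_level_def)
  have vertex: "S2n_labeling f n t (Inl (v, c)) = (f (Inl v) - 1) * (n + 1) + transpose 0 t c + 1"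
    for v c by (simp add: S2n_labeling_def S2n_proj_def S2n_level_def)
  have "(f (Inl x) - 1) + (f (Inr {x, y}) - 1) + (f (Inl y) - 1) = \<sigma> - 3"
    using pos sum by linarith
  then have "(f (Inl x) - 1) * (n + 1) + (f (Inr {x, y}) - 1) * (n + 1) + (f (Inl y) - 1) * (n + 1)
      = (\<sigma> - 3) * (n + 1)"
    by (metis add_mult_distrib)
  then have key: "S2n_labeling f n t (Inl (x, a)) + S2n_labeling f n t (Inr {(x, a), (y, a')})
      + S2n_labeling f n t (Inl (y, a')) = (\<sigma> - 3) * (n + 1) + n + 3 + t"
    unfolding vertex edge[unfolded lift] using levels \<open>transpose 0 t b \<le> n\<close> by linarith
  from uw lift consider "u = (x, a)" "w = (y, a')" | "u = (y, a')" "w = (x, a)"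
    by (auto simp: doubleton_eq_iff)
  then show ?thesis
  proof cases
    case 2
    with key show ?thesis by (simp add: insert_commute add_ac)
  qed (use key in simp)
qed

lemma edge_magic_labelingI:
  assumes "bij_betw f (Inl ` V \<union> Inr ` E) {1..N}"
    and "\<And>x y. {x, y} \<in> E \<Longrightarrow> x \<noteq> y \<Longrightarrow> f (Inl x) + f (Inr {x, y}) + f (Inl y) = k"
  shows "edge_magic_labeling V E f k"
proof -
  have "finite (Inl ` V \<union> Inr ` E)" using bij_betw_finite assms(1) by blast
  then have "finite V" "finite E" by (auto dest: finite_imageD)
  then have "card V + card E = card (Inl ` V \<union> Inr ` E)"
    by (simp add: card_Plus Plus_def [symmetric])
  also have "\<dots> = N" using bij_betw_same_card[OF assms(1)] by simp
  finally show ?thesis using assms by (simp add: edge_magic_labeling_def)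
qed

lemma S2n_edge_magic_labeling:
  assumes "bipartite_with V E X Y" and "edge_decomposition E E1 E2"
    and "edge_magic_labeling V E f \<sigma>" and "t \<le> n"
  shows "edge_magic_labeling (S2n_vertices V n) (S2n_edges X Y E E1 E2 n) (S2n_labeling f n t)
    ((\<sigma> - 3) * (n + 1) + n + 3 + t)"
proof (rule edge_magic_labelingI)
  show "bij_betw (S2n_labeling f n t) (Inl ` S2n_vertices V n \<union> Inr ` S2n_edges X Y E E1 E2 n)
      {1..(card V + card E) * (n + 1)}"
    using assms by (intro bij_betw_S2n_labeling) (auto simp: edge_magic_labeling_def)
qed (use S2n_labeling_edge_sum[OF assms] in blast)

lemma S2n_valences_superset:
  assumes "bipartite_with V E X Y" and "edge_decomposition E E1 E2" and "\<sigma> \<in> valences V E"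
  shows "(\<lambda>t. (\<sigma> - 3) * (n + 1) + n + 3 + t) ` {0..n}
    \<subseteq> valences (S2n_vertices V n) (S2n_edges X Y E E1 E2 n)"
  using assms S2n_edge_magic_labeling unfolding valences_def by fastforce

theorem mainTheorem13:
  fixes V X Y :: "'a set" and E E1 E2 :: "'a set set"
  assumes "simple_graph V E"
    and "edge_magic V E"
    and "bipartite_with V E X Y"
    and "edge_decomposition E E1 E2"
  shows "\<forall>M::nat. \<forall>\<^sub>F n in sequentially.
           (let T = valences (S2n_vertices V n) (S2n_edges X Y E E1 E2 n)
            in infinite T \<or> M \<le> card T)"
proof (intro allI eventually_sequentiallyI)
  \<comment> \<open>Finiteness of \<open>V\<close> and \<open>E\<close> follows from the labeling.\<close>
  fix M n :: nat
  assume "M \<le> n"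
  obtain \<sigma> where "\<sigma> \<in> valences V E" using assms(2) unfolding edge_magic_def by blast
  let ?T = "valences (S2n_vertices V n) (S2n_edges X Y E E1 E2 n)"
  have "inj_on (\<lambda>t. (\<sigma> - 3) * (n + 1) + n + 3 + t) {0..n}" by (rule inj_onI) simp
  then have "n + 1 = card ((\<lambda>t. (\<sigma> - 3) * (n + 1) + n + 3 + t) ` {0..n})"
    by (simp add: card_image)
  also have "\<dots> \<le> card ?T" if "finite ?T"
    using card_mono[OF that S2n_valences_superset[OF assms(3,4) \<open>\<sigma> \<in> valences V E\<close>]] .
  finally show "let T = ?T in infinite T \<or> M \<le> card T"
    using \<open>M \<le> n\<close> by (auto simp: Let_def)
qed

end
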